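(* Let $C(c_0)$ be the vector space of all continuous maps $f\colon c_0\to c_0$ (over $\mathbb{R}$), endowed with the linear topology of uniform convergence on bounded subsets of $c_0$. Let $\mathscr{K}(c_0)\subseteq C(c_0)$ be the set of all $f\in C(c_0)$ for which there is no nonempty open interval $I\subseteq\mathbb{R}$ and no differentiable map $u\colon I\to c_0$ with $u'(t)=f(u(t))$ for all $t\in I$. Then $\mathscr{K}(c_0)$ is $\mathfrak{c}$-spaceable in $C(c_0)$; that is, there is a closed linear subspace $V$ of $C(c_0)$ with $\dim V=\mathfrak{c}$ and $V\subseteq \mathscr{K}(c_0)\cup\{0\}$.
   Context: $c_0$ denotes the Banach space of real null sequences with the sup norm. $\mathfrak{c}$ denotes the cardinality of the continuum. For a cardinal $\mu$ and a subset $A$ of a topological vector space $E$, $A$ is called $\mu$-spaceable if $A\cup\{0\}$ contains a closed linear subspace of $E$ of (algebraic) dimension $\mu$. *)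

theory Defs
  imports "HOL-Analysis.Analysis" "HOL-Library.Function_Algebras" "HOL-Library.Equipollence"
begin

section \<open>The Banach space c_0 of real null sequences with the sup norm\<close>

text \<open>c_0 is realised as the subspace of the space of bounded (continuous) real
  sequences with the sup norm consisting of the sequences converging to 0.\<close>

definition c0_set :: "(nat \<Rightarrow>\<^sub>C real) set" where
  "c0_set = {x. (\<lambda>n. apply_bcontfun x n) \<longlonglongrightarrow> 0}"

typedef c0 = c0_set
  morphisms c0_rep Abs_c0
  by (rule exI[of _ 0]) (simp add: c0_set_def)

setup_lifting type_definition_c0

instantiation c0 :: real_normed_vector
begin

lift_definition zero_c0 :: c0 is 0 by (simp add: c0_set_def)
lift_definition plus_c0 :: "c0 \<Rightarrow> c0 \<Rightarrow> c0" is "(+)"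
  by (auto simp: c0_set_def intro: tendsto_add_zero)
lift_definition minus_c0 :: "c0 \<Rightarrow> c0 \<Rightarrow> c0" is "(-)"
  by (auto simp: c0_set_def dest: tendsto_diff[where b=0 and a=0, simplified])
lift_definition uminus_c0 :: "c0 \<Rightarrow> c0" is uminus
  by (auto simp: c0_set_def dest: tendsto_minus[where a=0, simplified])
lift_definition scaleR_c0 :: "real \<Rightarrow> c0 \<Rightarrow> c0" is scaleR
  by (auto simp: c0_set_def dest: tendsto_mult_right_zero)
lift_definition norm_c0 :: "c0 \<Rightarrow> real" is norm .
lift_definition dist_c0 :: "c0 \<Rightarrow> c0 \<Rightarrow> real" is dist .
definition sgn_c0 :: "c0 \<Rightarrow> c0" where "sgn_c0 x = scaleR (inverse (norm_class.norm x)) x"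
definition uniformity_c0 :: "(c0 \<times> c0) filter" where
  "uniformity_c0 = (INF e\<in>{0 <..}. principal {(x, y). dist x y < e})"
definition open_c0 :: "c0 set \<Rightarrow> bool" where
  "open_c0 S = (\<forall>x\<in>S. \<forall>\<^sub>F (x', y) in uniformity. x' = x \<longrightarrow> y \<in> S)"

instance
proof
  fix x y z :: c0 and a b :: real
  show "x + y + z = x + (y + z)" by transfer (simp add: algebra_simps)
  show "x + y = y + x" by transfer (simp add: algebra_simps)
  show "0 + x = x" by transfer simp
  show "- x + x = 0" by transfer simp
  show "x - y = x + - y" by transfer simp
  show "a *\<^sub>R (x + y) = a *\<^sub>R x + a *\<^sub>R y" by transfer (simp add: algebra_simps)
  show "(a + b) *\<^sub>R x = a *\<^sub>R x + b *\<^sub>R x" by transfer (simp add: algebra_simps)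
  show "a *\<^sub>R b *\<^sub>R x = (a * b) *\<^sub>R x" by transfer simp
  show "1 *\<^sub>R x = x" by transfer simp
  show "dist x y = norm (x - y)" by transfer (simp add: dist_norm)
  show "sgn x = scaleR (inverse (norm x)) x" by (simp add: sgn_c0_def)
  show "norm (x + y) \<le> norm x + norm y" by transfer (rule norm_triangle_ineq)
  show "norm (a *\<^sub>R x) = \<bar>a\<bar> * norm x" by transfer simp
  show "(norm x = 0) = (x = 0)" by transfer simp
qed (simp_all add: uniformity_c0_def open_c0_def)

end

section \<open>The space C(c_0) and its topology of uniform convergence on bounded sets\<close>

text \<open>Maps from c_0 to c_0 form a real vector space under pointwise operations
  (HOL-Library.Function_Algebras for +, 0, -; scalar multiplication below).\<close>

definition fscale :: "real \<Rightarrow> (c0 \<Rightarrow> c0) \<Rightarrow> (c0 \<Rightarrow> c0)" where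
  "fscale c f = (\<lambda>x. c *\<^sub>R f x)"

definition Cc0 :: "(c0 \<Rightarrow> c0) set" where
  "Cc0 = {f. continuous_on UNIV f}"

definition ucb_open :: "(c0 \<Rightarrow> c0) set \<Rightarrow> bool" where
  "ucb_open U \<longleftrightarrow> U \<subseteq> Cc0 \<and>
     (\<forall>f\<in>U. \<exists>B. bounded B \<and> (\<exists>e>0. {g\<in>Cc0. \<forall>x\<in>B. dist (g x) (f x) < e} \<subseteq> U))"

lemma istopology_ucb_open: "istopology ucb_open"
  unfolding istopology_def
proof (intro conjI allI impI ballI)
  fix S T assume S: "ucb_open S" and T: "ucb_open T"
  show "ucb_open (S \<inter> T)"
    unfolding ucb_open_def
  proof (intro conjI ballI)
    show "S \<inter> T \<subseteq> Cc0" using S unfolding ucb_open_def by blast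
    fix f assume f: "f \<in> S \<inter> T"
    obtain B1 e1 where B1: "bounded B1" "e1 > 0" "{g\<in>Cc0. \<forall>x\<in>B1. dist (g x) (f x) < e1} \<subseteq> S"
      using S f unfolding ucb_open_def by blast
    obtain B2 e2 where B2: "bounded B2" "e2 > 0" "{g\<in>Cc0. \<forall>x\<in>B2. dist (g x) (f x) < e2} \<subseteq> T"
      using T f unfolding ucb_open_def by blast
    show "\<exists>B. bounded B \<and> (\<exists>e>0. {g\<in>Cc0. \<forall>x\<in>B. dist (g x) (f x) < e} \<subseteq> S \<inter> T)"
    proof (intro exI conjI)
      show "bounded (B1 \<union> B2)" using B1 B2 by simp
      show "min e1 e2 > 0" using B1 B2 by simp
      show "{g\<in>Cc0. \<forall>x\<in>B1 \<union> B2. dist (g x) (f x) < min e1 e2} \<subseteq> S \<inter> T"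
      proof
        fix g assume g: "g \<in> {g\<in>Cc0. \<forall>x\<in>B1 \<union> B2. dist (g x) (f x) < min e1 e2}"
        then have "g \<in> {g\<in>Cc0. \<forall>x\<in>B1. dist (g x) (f x) < e1}" by auto
        moreover from g have "g \<in> {g\<in>Cc0. \<forall>x\<in>B2. dist (g x) (f x) < e2}" by auto
        ultimately show "g \<in> S \<inter> T" using B1(3) B2(3) by blast
      qed
    qed
  qed
next
  fix K assume K: "\<forall>S\<in>K. ucb_open S"
  show "ucb_open (\<Union>K)"
    unfolding ucb_open_def
  proof (intro conjI ballI)
    show "\<Union>K \<subseteq> Cc0"
    proof
      fix h assume "h \<in> \<Union>K"
      then obtain S where "S \<in> K" "h \<in> S" by blast
      moreover have "ucb_open S" using K \<open>S \<in> K\<close> by blast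
      ultimately show "h \<in> Cc0" unfolding ucb_open_def by blast
    qed
    fix f assume "f \<in> \<Union>K"
    then obtain S where S: "S \<in> K" "f \<in> S" by blast
    then have "ucb_open S" using K by blast
    then obtain B e where "bounded B" "e > 0" "{g\<in>Cc0. \<forall>x\<in>B. dist (g x) (f x) < e} \<subseteq> S"
      using S(2) unfolding ucb_open_def by blast
    moreover have "S \<subseteq> \<Union>K" using S(1) by blast
    ultimately show "\<exists>B. bounded B \<and> (\<exists>e>0. {g\<in>Cc0. \<forall>x\<in>B. dist (g x) (f x) < e} \<subseteq> \<Union>K)"
      by blast
  qed
qed

definition ucb_topology :: "(c0 \<Rightarrow> c0) topology" where
  "ucb_topology = topology ucb_open"

definition Kc0 :: "(c0 \<Rightarrow> c0) set" where
  "Kc0 = {f\<in>Cc0. \<not> (\<exists>I u. open I \<and> is_interval I \<and> I \<noteq> {} \<and>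
            (\<forall>t\<in>I. (u has_vector_derivative f (u t)) (at t)))}"

text \<open>A is \<mu>-spaceable (\<mu> given by a representative set M of that cardinality) if
  A \<union> {0} contains a closed linear subspace of algebraic dimension \<mu>, i.e. one
  having a Hamel basis equipollent to M.\<close>

definition spaceable :: "'b set \<Rightarrow> (c0 \<Rightarrow> c0) set \<Rightarrow> bool" where
  "spaceable M A \<longleftrightarrow> (\<exists>V. closedin ucb_topology V \<and> module.subspace fscale V \<and>
      (\<exists>B. \<not> module.dependent fscale B \<and> module.span fscale B = V \<and> B \<approx> M) \<and>
      V \<subseteq> A \<union> {0})"

end

theory Submission
  imports Defs "HOL-Library.Nat_Bijection"
begin

(* Split the coordinates of c_0 into infinitely many infinite blocks, indexed by
   block n = fst (prod_decode n), and consider the fields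
     g(x)_n = beta_(block n) * (sqrt |x_n| + eps_n),   eps_n = 1/(n+1),
   for real sequences beta.  The set V of all continuous fields of this
   shape is a linear subspace, and it is closed for uniform convergence on bounded
   sets because membership is a family of equations between finitely many point
   evaluations.  If beta_k <> 0 and u solves u' = g(u) on [t0,t1], then along each
   coordinate n of block k the scalar equation w' = beta_k (sqrt |w| + eps_n)
   forces |sqrt w(t1) - sqrt w(t0)| >= |beta_k| (t1 - t0)/2, which contradicts
   u(t0), u(t1) being null sequences; so V - {0} has no local solutions.
   Finally V has dimension continuum: it injects into the real sequences, and the
   fields with beta = indicator of {k. r_k < l} (r an enumeration of the rationals,
   l real) are linearly independent.  A general criterion (a closed subspace of
   cardinality at most |M| containing an independent set of cardinality at least
   |M| has a Hamel basis of cardinality |M|) then gives the theorem. *)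

section \<open>Coordinates of c_0\<close>

definition coord :: "nat \<Rightarrow> c0 \<Rightarrow> real" where
  "coord n x = apply_bcontfun (c0_rep x) n"

definition of_null_seq :: "(nat \<Rightarrow> real) \<Rightarrow> c0" where
  "of_null_seq s = Abs_c0 (Bcontfun s)"

lemma coord_of_null_seq:
  assumes "s \<longlonglongrightarrow> 0"
  shows "coord n (of_null_seq s) = s n"
proof -
  have "bounded (range s)"
    using assms by (metis Bseq_eq_bounded convergent_imp_Bseq convergentI)
  then have b: "s \<in> bcontfun" by (simp add: bcontfun_def)
  then have "Bcontfun s \<in> c0_set"
    using assms by (simp add: c0_set_def Bcontfun_inverse)
  then show ?thesis
    by (simp add: coord_def of_null_seq_def Abs_c0_inverse Bcontfun_inverse b)
qed

lemma coord_tendsto_zero: "(\<lambda>n. coord n x) \<longlonglongrightarrow> 0"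
  using c0_rep[of x] by (simp add: coord_def c0_set_def)

lemma coord_add [simp]: "coord n (x + y) = coord n x + coord n y"
  by (simp add: coord_def plus_c0.rep_eq)

lemma coord_diff [simp]: "coord n (x - y) = coord n x - coord n y"
  by (simp add: coord_def minus_c0.rep_eq)

lemma coord_scaleR [simp]: "coord n (c *\<^sub>R x) = c * coord n x"
  by (simp add: coord_def scaleR_c0.rep_eq)

lemma coord_zero [simp]: "coord n 0 = 0"
  by (simp add: coord_def zero_c0.rep_eq)

lemma c0_eqI: "(\<And>n. coord n x = coord n y) \<Longrightarrow> x = y"
  unfolding coord_def by (metis bcontfun_eqI c0_rep_inject)

lemma abs_coord_le_norm: "\<bar>coord n x\<bar> \<le> norm x"
  unfolding coord_def norm_c0.rep_eq using norm_bounded[of "c0_rep x" n] by simp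

lemma norm_c0_le: "(\<And>n. \<bar>coord n x\<bar> \<le> M) \<Longrightarrow> norm x \<le> M"
  unfolding norm_c0.rep_eq coord_def by (rule norm_bound) simp

lemma bounded_linear_coord: "bounded_linear (coord n)"
  by (rule bounded_linear_intro[where K=1]) (auto simp: abs_coord_le_norm)

section \<open>A scalar comparison estimate\<close>

text \<open>The (odd) real square root is differentiable away from 0.\<close>

lemma DERIV_sqrt_nonzero: "(x::real) \<noteq> 0 \<Longrightarrow> DERIV sqrt x :> inverse (2 * sqrt \<bar>x\<bar>)"
proof (rule DERIV_real_sqrt_generic)
  assume "x < 0"
  then have "\<bar>x\<bar> = - x" by simp
  moreover have "sqrt (- x) = - sqrt x" by (rule real_sqrt_minus)
  ultimately show "inverse (2 * sqrt \<bar>x\<bar>) = - inverse (sqrt x) / 2"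
    by (simp add: inverse_mult_distrib)
qed (auto simp: inverse_mult_distrib)

lemma mvt_lower_bound:
  fixes h :: "real \<Rightarrow> real"
  assumes "a \<le> b" "continuous_on {a..b} h"
    and deriv: "\<And>t. a < t \<Longrightarrow> t < b \<Longrightarrow> \<exists>D. (h has_real_derivative D) (at t) \<and> m \<le> D"
  shows "m * (b - a) \<le> h b - h a"
proof (cases "a = b")
  case False
  then have ab: "a < b" using assms by simp
  have "\<And>x. a < x \<Longrightarrow> x < b \<Longrightarrow> h differentiable (at x)"
    using deriv real_differentiable_def by blast
  then obtain l z where z: "a < z" "z < b" "DERIV h z :> l" "h b - h a = (b - a) * l"
    using MVT[OF ab assms(2)] by blast
  obtain D where D: "(h has_real_derivative D) (at z)" "m \<le> D" using deriv z by blast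
  have "l = D" using DERIV_unique z(3) D(1) by blast
  then show ?thesis using z D ab by (simp add: mult.commute mult_right_mono)
qed simp

lemma sqrt_comp_ode_deriv_ge:
  fixes w :: "real \<Rightarrow> real"
  assumes \<beta>: "\<beta> > 0" and e: "e > 0" and nz: "w t \<noteq> 0"
    and der: "(w has_real_derivative \<beta> * (sqrt \<bar>w t\<bar> + e)) (at t)"
  shows "\<exists>D. ((\<lambda>t. sqrt (w t)) has_real_derivative D) (at t) \<and> \<beta> / 2 \<le> D"
proof -
  let ?s = "sqrt \<bar>w t\<bar>"
  have s: "?s > 0" using nz by simp
  have "((\<lambda>t. sqrt (w t)) has_real_derivative inverse (2 * ?s) * (\<beta> * (?s + e))) (at t)"
    using DERIV_chain2[OF DERIV_sqrt_nonzero[OF nz] der] .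
  moreover have "inverse (2 * ?s) * (\<beta> * (?s + e)) = \<beta> / 2 + \<beta> * e / (2 * ?s)"
    using s by (simp add: field_simps)
  moreover have "\<beta> * e / (2 * ?s) \<ge> 0" using s \<beta> e by simp
  ultimately show ?thesis by (metis le_add_same_cancel1)
qed

text \<open>A solution of w' = beta (sqrt |w| + e) with beta, e > 0 makes sqrt w grow at
  least at rate beta/2; at a zero of w the estimate is obtained on both sides
  separately, since sqrt is not differentiable there.\<close>

lemma sqrt_growth_of_ode:
  fixes w :: "real \<Rightarrow> real"
  assumes t01: "t0 < t1" and \<beta>: "\<beta> > 0" and e: "e > 0"
    and der: "\<And>t. t0 \<le> t \<Longrightarrow> t \<le> t1 \<Longrightarrow> (w has_real_derivative \<beta> * (sqrt \<bar>w t\<bar> + e)) (at t)"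
  shows "\<beta> * (t1 - t0) / 2 \<le> sqrt (w t1) - sqrt (w t0)"
proof -
  have cont: "continuous_on {t0..t1} (\<lambda>t. sqrt (w t))"
    using der by (intro continuous_intros) (meson DERIV_atLeastAtMost_imp_continuous_on)
  have rate_pos: "\<beta> * (sqrt \<bar>w t\<bar> + e) > 0" for t
    using \<beta> e by (simp add: add_nonneg_pos)
  have increasing: "w x < w y" if "t0 \<le> x" "x < y" "y \<le> t1" for x y
  proof (rule DERIV_pos_imp_increasing[OF that(2)])
    fix t assume "x \<le> t" "t \<le> y"
    then show "\<exists>D. DERIV w t :> D \<and> D > 0" using der[of t] rate_pos[of t] that by auto
  qed
  have piece: "\<beta> / 2 * (b - a) \<le> sqrt (w b) - sqrt (w a)"
    if "t0 \<le> a" "a \<le> b" "b \<le> t1" "\<And>t. a < t \<Longrightarrow> t < b \<Longrightarrow> w t \<noteq> 0" for a b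
  proof (rule mvt_lower_bound)
    show "continuous_on {a..b} (\<lambda>t. sqrt (w t))"
      using cont that by (auto elim: continuous_on_subset)
  qed (use that der sqrt_comp_ode_deriv_ge \<beta> e in auto)
  show ?thesis
  proof (cases "\<exists>z. t0 < z \<and> z < t1 \<and> w z = 0")
    case True
    then obtain z where z: "t0 < z" "z < t1" "w z = 0" by blast
    have "\<beta> / 2 * (z - t0) \<le> sqrt (w z) - sqrt (w t0)"
    proof (rule piece)
      fix t assume "t0 < t" "t < z"
      then show "w t \<noteq> 0" using increasing[of t z] z by simp
    qed (use z in auto)
    moreover have "\<beta> / 2 * (t1 - z) \<le> sqrt (w t1) - sqrt (w z)"
    proof (rule piece)
      fix t assume "z < t" "t < t1"
      then show "w t \<noteq> 0" using increasing[of z t] z by simp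
    qed (use z in auto)
    ultimately show ?thesis by (simp add: field_simps)
  next
    case False
    then show ?thesis using piece[of t0 t1] t01 by simp
  qed
qed

lemma sqrt_growth_of_ode_abs:
  fixes w :: "real \<Rightarrow> real"
  assumes t01: "t0 < t1" and \<beta>: "\<beta> \<noteq> 0" and e: "e > 0"
    and der: "\<And>t. t0 \<le> t \<Longrightarrow> t \<le> t1 \<Longrightarrow> (w has_real_derivative \<beta> * (sqrt \<bar>w t\<bar> + e)) (at t)"
  shows "\<bar>\<beta>\<bar> * (t1 - t0) / 2 \<le> \<bar>sqrt (w t1) - sqrt (w t0)\<bar>"
proof (cases "\<beta> > 0")
  case True
  then show ?thesis using sqrt_growth_of_ode[OF t01 True e der] by linarith
next
  case False
  then have neg: "- \<beta> > 0" using \<beta> by simp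
  have "(- \<beta>) * (t1 - t0) / 2 \<le> sqrt (- w t1) - sqrt (- w t0)"
  proof (rule sqrt_growth_of_ode[OF t01 neg e])
    fix t assume "t0 \<le> t" "t \<le> t1"
    then have "((\<lambda>t. - w t) has_real_derivative - (\<beta> * (sqrt \<bar>w t\<bar> + e))) (at t)"
      using der by (intro DERIV_minus) auto
    then show "((\<lambda>t. - w t) has_real_derivative - \<beta> * (sqrt \<bar>- w t\<bar> + e)) (at t)"
      by simp
  qed
  then show ?thesis using False by (simp add: real_sqrt_minus)
qed

lemma abs_sqrt_abs_diff_le: "\<bar>sqrt \<bar>a\<bar> - sqrt \<bar>c\<bar>\<bar> \<le> sqrt \<bar>a - c\<bar>"
proof -
  have ordered: "\<bar>sqrt u - sqrt v\<bar> \<le> sqrt \<bar>u - v\<bar>" if "0 \<le> v" "v \<le> u" for u v :: real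
  proof -
    have "sqrt v * sqrt v \<le> sqrt u * sqrt v"
      by (rule mult_right_mono) (simp_all add: that)
    then have "(sqrt u - sqrt v)^2 \<le> u - v"
      using that by (simp add: power2_eq_square algebra_simps)
    moreover have "sqrt v \<le> sqrt u" using that by simp
    ultimately show ?thesis using that
      by (metis abs_of_nonneg diff_ge_0_iff_ge real_le_rsqrt)
  qed
  have "\<bar>sqrt \<bar>a\<bar> - sqrt \<bar>c\<bar>\<bar> \<le> sqrt \<bar>\<bar>a\<bar> - \<bar>c\<bar>\<bar>"
    using ordered[of "\<bar>c\<bar>" "\<bar>a\<bar>"] ordered[of "\<bar>a\<bar>" "\<bar>c\<bar>"]
    by (cases "\<bar>c\<bar> \<le> \<bar>a\<bar>") (auto simp: abs_minus_commute)
  also have "\<dots> \<le> sqrt \<bar>a - c\<bar>" by simp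
  finally show ?thesis .
qed

section \<open>The square-root fields\<close>

text \<open>The coordinates of c_0 are split into the infinite blocks
  {n. block n = k}; block_base k is a fixed member of block k.\<close>

definition block :: "nat \<Rightarrow> nat" where "block n = fst (prod_decode n)"

definition block_base :: "nat \<Rightarrow> nat" where "block_base k = prod_encode (k, 0)"

definition eps :: "nat \<Rightarrow> real" where "eps n = inverse (real (Suc n))"

definition sqrt_field :: "(nat \<Rightarrow> real) \<Rightarrow> c0 \<Rightarrow> c0" where
  "sqrt_field b = (\<lambda>x. of_null_seq (\<lambda>n. b (block n) * (sqrt \<bar>coord n x\<bar> + eps n)))"

definition coef :: "(c0 \<Rightarrow> c0) \<Rightarrow> nat \<Rightarrow> real" where
  "coef g k = coord (block_base k) (g 0) / eps (block_base k)"

definition sqrt_fields :: "(c0 \<Rightarrow> c0) set" where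
  "sqrt_fields = {g\<in>Cc0. \<forall>x n. coord n (g x) = coef g (block n) * (sqrt \<bar>coord n x\<bar> + eps n)}"

lemma eps_pos [simp]: "eps n > 0"
  by (simp add: eps_def)

lemma eps_nonzero [simp]: "eps n \<noteq> 0"
  using eps_pos[of n] by linarith

lemma block_block_base [simp]: "block (block_base k) = k"
  by (simp add: block_def block_base_def)

lemma sqrt_field_seq_tendsto_zero:
  assumes b: "\<And>k. \<bar>b k\<bar> \<le> 1"
  shows "(\<lambda>n. b (block n) * (sqrt \<bar>coord n x\<bar> + eps n)) \<longlonglongrightarrow> 0"
proof (rule Lim_null_comparison)
  have "(\<lambda>n. sqrt \<bar>coord n x\<bar> + eps n) \<longlonglongrightarrow> sqrt \<bar>0\<bar> + 0"
    unfolding eps_def by (intro tendsto_intros coord_tendsto_zero LIMSEQ_inverse_real_of_nat)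
  then show "(\<lambda>n. sqrt \<bar>coord n x\<bar> + eps n) \<longlonglongrightarrow> 0" by simp
  have "0 \<le> sqrt \<bar>coord n x\<bar> + eps n" for n
    using eps_pos[of n] by (simp add: add_nonneg_pos less_imp_le)
  then show "\<forall>\<^sub>F n in sequentially. norm (b (block n) * (sqrt \<bar>coord n x\<bar> + eps n))
      \<le> sqrt \<bar>coord n x\<bar> + eps n"
    using b by (intro always_eventually allI) (simp add: abs_mult mult_left_le_one_le)
qed

lemma coord_sqrt_field:
  "(\<And>k. \<bar>b k\<bar> \<le> 1) \<Longrightarrow> coord n (sqrt_field b x) = b (block n) * (sqrt \<bar>coord n x\<bar> + eps n)"
  unfolding sqrt_field_def by (rule coord_of_null_seq[OF sqrt_field_seq_tendsto_zero])

lemma coef_sqrt_field: "(\<And>k. \<bar>b k\<bar> \<le> 1) \<Longrightarrow> coef (sqrt_field b) k = b k"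
  unfolding coef_def by (simp add: coord_sqrt_field)

lemma dist_sqrt_field_le:
  assumes b: "\<And>k. \<bar>b k\<bar> \<le> 1"
  shows "dist (sqrt_field b x) (sqrt_field b y) \<le> sqrt (dist x y)"
proof -
  have "norm (sqrt_field b x - sqrt_field b y) \<le> sqrt (norm (x - y))"
  proof (rule norm_c0_le)
    fix n
    have "\<bar>coord n (sqrt_field b x - sqrt_field b y)\<bar>
        = \<bar>b (block n)\<bar> * \<bar>sqrt \<bar>coord n x\<bar> - sqrt \<bar>coord n y\<bar>\<bar>"
      by (simp add: coord_sqrt_field[OF b] abs_mult[symmetric] algebra_simps)
    also have "\<dots> \<le> \<bar>sqrt \<bar>coord n x\<bar> - sqrt \<bar>coord n y\<bar>\<bar>"
      using b[of "block n"] by (simp add: mult_left_le_one_le)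
    also have "\<dots> \<le> sqrt \<bar>coord n x - coord n y\<bar>" by (rule abs_sqrt_abs_diff_le)
    also have "\<dots> \<le> sqrt (norm (x - y))"
      using abs_coord_le_norm[of n "x - y"] by simp
    finally show "\<bar>coord n (sqrt_field b x - sqrt_field b y)\<bar> \<le> sqrt (norm (x - y))" .
  qed
  then show ?thesis by (simp add: dist_norm)
qed

lemma sqrt_field_continuous:
  assumes b: "\<And>k. \<bar>b k\<bar> \<le> 1"
  shows "sqrt_field b \<in> Cc0"
  unfolding Cc0_def
proof (simp add: continuous_on_iff, intro allI impI)
  fix x and e :: real assume e: "0 < e"
  show "\<exists>d>0. \<forall>x'. dist x' x < d \<longrightarrow> dist (sqrt_field b x') (sqrt_field b x) < e"
  proof (intro exI[of _ "e\<^sup>2"] conjI allI impI)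
    show "0 < e\<^sup>2" using e by simp
    fix x' assume "dist x' x < e\<^sup>2"
    then have "sqrt (dist x' x) < e"
      using e real_sqrt_less_mono by fastforce
    then show "dist (sqrt_field b x') (sqrt_field b x) < e"
      using dist_sqrt_field_le[where b=b and x=x' and y=x, OF b] by linarith
  qed
qed

lemma sqrt_field_in_sqrt_fields: "(\<And>k. \<bar>b k\<bar> \<le> 1) \<Longrightarrow> sqrt_field b \<in> sqrt_fields"
  unfolding sqrt_fields_def using sqrt_field_continuous by (auto simp: coef_sqrt_field coord_sqrt_field)

lemma sqrt_fields_eqI:
  assumes "g \<in> sqrt_fields" "h \<in> sqrt_fields" "\<And>k. coef g k = coef h k"
  shows "g = h"
proof
  fix x
  show "g x = h x"
    by (rule c0_eqI) (use assms in \<open>simp add: sqrt_fields_def\<close>)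
qed

section \<open>V is a closed linear subspace\<close>

lemma vector_space_fscale: "vector_space fscale"
  by unfold_locales (simp_all add: fscale_def fun_eq_iff scaleR_add_right scaleR_add_left)

lemma fscale_apply: "fscale c f x = c *\<^sub>R f x"
  by (simp add: fscale_def)

lemma coef_add: "coef (g + h) k = coef g k + coef h k"
  by (simp add: coef_def add_divide_distrib)

lemma coef_fscale: "coef (fscale c g) k = c * coef g k"
  by (simp add: coef_def fscale_def)

lemma coef_zero: "coef 0 k = 0"
  by (simp add: coef_def)

lemma zero_in_sqrt_fields: "0 \<in> sqrt_fields"
  by (simp add: sqrt_fields_def Cc0_def coef_zero)

lemma subspace_sqrt_fields: "module.subspace fscale sqrt_fields"
proof -
  interpret vector_space fscale by (rule vector_space_fscale)
  show ?thesis
  proof (rule subspaceI)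
    fix g h assume "g \<in> sqrt_fields" "h \<in> sqrt_fields"
    then show "g + h \<in> sqrt_fields"
      unfolding sqrt_fields_def Cc0_def
      by (auto simp: coef_add algebra_simps intro: continuous_on_add)
  next
    fix c g assume g: "g \<in> sqrt_fields"
    then have "continuous_on UNIV (fscale c g)"
      unfolding fscale_def sqrt_fields_def Cc0_def by (auto intro: continuous_intros)
    then show "fscale c g \<in> sqrt_fields"
      using g unfolding sqrt_fields_def Cc0_def by (auto simp: coef_fscale fscale_apply)
  qed (rule zero_in_sqrt_fields)
qed

lemma openin_ucb_topology: "openin ucb_topology = ucb_open"
  unfolding ucb_topology_def by (rule topology_inverse'[OF istopology_ucb_open])

lemma topspace_ucb_topology: "topspace ucb_topology = Cc0"
proof -
  have "ucb_open Cc0"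
    unfolding ucb_open_def by (auto intro: exI[of _ "{}"] exI[of _ 1])
  moreover have "S \<subseteq> Cc0" if "ucb_open S" for S using that by (simp add: ucb_open_def)
  ultimately show ?thesis
    unfolding topspace_def openin_ucb_topology by blast
qed

lemma continuous_map_eval_ucb: "continuous_map ucb_topology euclidean (\<lambda>g. g x)"
  unfolding continuous_map openin_ucb_topology topspace_ucb_topology
proof (intro conjI allI impI)
  fix U :: "c0 set" assume "openin euclidean U"
  then have U: "open U" by simp
  show "ucb_open {g \<in> Cc0. g x \<in> U}"
    unfolding ucb_open_def
  proof (intro conjI ballI)
    fix f assume f: "f \<in> {g \<in> Cc0. g x \<in> U}"
    then obtain e where e: "e > 0" "ball (f x) e \<subseteq> U"
      using U open_contains_ball by blast
    have "{g \<in> Cc0. \<forall>y\<in>{x}. dist (g y) (f y) < e} \<subseteq> {g \<in> Cc0. g x \<in> U}"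
      using e by (auto simp: dist_commute)
    then show "\<exists>B. bounded B \<and> (\<exists>e>0. {g \<in> Cc0. \<forall>y\<in>B. dist (g y) (f y) < e} \<subseteq> {g \<in> Cc0. g x \<in> U})"
      using e(1) by blast
  qed blast
qed simp

lemma continuous_map_coord_eval_ucb:
  "continuous_map ucb_topology euclideanreal (\<lambda>g. coord n (g x))"
proof -
  have "continuous_on UNIV (coord n)"
    by (rule linear_continuous_on[OF bounded_linear_coord])
  then show ?thesis
    using continuous_map_compose[OF continuous_map_eval_ucb[of x], of euclideanreal "coord n"]
    by (simp add: o_def)
qed

text \<open>Membership in V is a family of linear equations between point
  evaluations, hence V is closed.\<close>

lemma closed_sqrt_fields: "closedin ucb_topology sqrt_fields"
proof -
  define R where "R x n g = coord n (g x) * eps (block_base (block n))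
      - coord (block_base (block n)) (g 0) * (sqrt \<bar>coord n x\<bar> + eps n)" for x n and g :: "c0 \<Rightarrow> c0"
  have equation: "coord n (g x) = coef g (block n) * (sqrt \<bar>coord n x\<bar> + eps n) \<longleftrightarrow> R x n g = 0"
    for x n g
    unfolding R_def coef_def by (auto simp: field_simps)
  have "sqrt_fields = \<Inter> ((\<lambda>(x, n). {g \<in> topspace ucb_topology. R x n g \<in> {0}}) ` UNIV)"
    unfolding sqrt_fields_def topspace_ucb_topology equation by auto
  moreover have "closedin ucb_topology {g \<in> topspace ucb_topology. R x n g \<in> {0}}" for x n
  proof (rule closedin_continuous_map_preimage)
    show "continuous_map ucb_topology euclideanreal (R x n)"
      unfolding R_def by (intro continuous_intros continuous_map_coord_eval_ucb)
  qed simp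
  ultimately show ?thesis
    by (metis (no_types, lifting) closedin_Inter image_is_empty imageE case_prod_beta UNIV_not_empty)
qed

section \<open>Nonzero elements of V have no local solutions\<close>

text \<open>Along a solution u of u' = g(u), each coordinate of block k solves the scalar
  equation of the comparison estimate, with coefficient coef g k.\<close>

lemma solution_sqrt_increment:
  assumes g: "g \<in> sqrt_fields" and t01: "t0 < t1" and nz: "coef g (block n) \<noteq> 0"
    and sol: "\<And>t. t0 \<le> t \<Longrightarrow> t \<le> t1 \<Longrightarrow> (u has_vector_derivative g (u t)) (at t)"
  shows "\<bar>coef g (block n)\<bar> * (t1 - t0) / 2 \<le> \<bar>sqrt (coord n (u t1)) - sqrt (coord n (u t0))\<bar>"
proof (rule sqrt_growth_of_ode_abs[OF t01 nz eps_pos])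
  fix t assume "t0 \<le> t" "t \<le> t1"
  then have "((\<lambda>s. coord n (u s)) has_vector_derivative coord n (g (u t))) (at t)"
    by (rule bounded_linear.has_vector_derivative[OF bounded_linear_coord sol])
  then show "((\<lambda>s. coord n (u s)) has_real_derivative
      coef g (block n) * (sqrt \<bar>coord n (u t)\<bar> + eps n)) (at t)"
    using g by (simp add: has_real_derivative_iff_has_vector_derivative sqrt_fields_def)
qed

text \<open>Block k contains coordinates n of arbitrarily large index, where the right
  hand side above is small; so no solution exists when coef g k is nonzero.\<close>

lemma sqrt_fields_in_Kc0:
  assumes g: "g \<in> sqrt_fields" and "g \<noteq> 0"
  shows "g \<in> Kc0"
proof -
  obtain k where k: "coef g k \<noteq> 0"
    using sqrt_fields_eqI[OF g zero_in_sqrt_fields] \<open>g \<noteq> 0\<close> coef_zero by auto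
  have "\<not> (\<exists>I u. open I \<and> is_interval I \<and> I \<noteq> {} \<and>
            (\<forall>t\<in>I. (u has_vector_derivative g (u t)) (at t)))"
  proof
    assume "\<exists>I u. open I \<and> is_interval I \<and> I \<noteq> {} \<and>
            (\<forall>t\<in>I. (u has_vector_derivative g (u t)) (at t))"
    then obtain I u t0 where I: "open I" "t0 \<in> I"
      and sol: "\<And>t. t \<in> I \<Longrightarrow> (u has_vector_derivative g (u t)) (at t)"
      by blast
    obtain \<delta> where \<delta>: "\<delta> > 0" "ball t0 \<delta> \<subseteq> I" using I open_contains_ball by blast
    define t1 where "t1 = t0 + \<delta> / 2"
    have t01: "t0 < t1" using \<delta> by (simp add: t1_def)
    have sub: "t \<in> I" if "t0 \<le> t" "t \<le> t1" for t
      using that \<delta> by (auto simp: t1_def dist_real_def)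
    define c where "c = \<bar>coef g k\<bar> * (t1 - t0) / 2"
    have c: "c > 0" using k t01 by (simp add: c_def)
    have bound: "c \<le> \<bar>sqrt (coord n (u t1)) - sqrt (coord n (u t0))\<bar>" if "block n = k" for n
      unfolding c_def using solution_sqrt_increment[OF g t01, of n u] that k sub sol by simp
    have "(\<lambda>n. sqrt (coord n (u t1)) - sqrt (coord n (u t0))) \<longlonglongrightarrow> sqrt 0 - sqrt 0"
      by (intro tendsto_intros coord_tendsto_zero)
    then obtain M where M: "\<And>n. n \<ge> M \<Longrightarrow> \<bar>sqrt (coord n (u t1)) - sqrt (coord n (u t0))\<bar> < c"
      using c unfolding LIMSEQ_iff by auto
    have "block (prod_encode (k, M)) = k" by (simp add: block_def)
    moreover have "prod_encode (k, M) \<ge> M" by (rule le_prod_encode_2)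
    ultimately show False using M bound by fastforce
  qed
  then show ?thesis using g by (simp add: Kc0_def sqrt_fields_def)
qed

section \<open>V has dimension continuum\<close>

lemma real_sequences_lepoll_reals: "(UNIV :: (nat \<Rightarrow> real) set) \<lesssim> (UNIV :: real set)"
proof -
  obtain \<rho> :: "real \<Rightarrow> nat set" where \<rho>: "inj \<rho>"
    using nat_sets_eqpoll_reals by (meson eqpoll_sym eqpoll_def bij_betw_imp_inj_on)
  define code where "code s = {prod_encode (k, m) | k m. m \<in> \<rho> (s k)}" for s :: "nat \<Rightarrow> real"
  have code_iff: "m \<in> \<rho> (s k) \<longleftrightarrow> prod_encode (k, m) \<in> code s" for s k m
    unfolding code_def by auto
  have "inj code"
  proof (rule injI)
    fix s s' assume eq: "code s = code s'"
    have "\<rho> (s k) = \<rho> (s' k)" for k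
      unfolding set_eq_iff code_iff eq by (rule allI) (rule refl)
    then show "s = s'" using \<rho> by (simp add: inj_eq fun_eq_iff)
  qed
  then have "(UNIV :: (nat \<Rightarrow> real) set) \<lesssim> (UNIV :: nat set set)"
    unfolding lepoll_def by blast
  also have "(UNIV :: nat set set) \<approx> (UNIV :: real set)" by (rule nat_sets_eqpoll_reals)
  finally show ?thesis .
qed

lemma sqrt_fields_lepoll_reals: "sqrt_fields \<lesssim> (UNIV :: real set)"
proof -
  have "inj_on coef sqrt_fields"
  proof (rule inj_onI)
    fix g h assume "g \<in> sqrt_fields" "h \<in> sqrt_fields" "coef g = coef h"
    then show "g = h" by (intro sqrt_fields_eqI) simp_all
  qed
  then have "sqrt_fields \<lesssim> (UNIV :: (nat \<Rightarrow> real) set)"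
    unfolding lepoll_def by blast
  then show ?thesis using real_sequences_lepoll_reals by (rule lepoll_trans)
qed

text \<open>Step functions at distinct reals, sampled at the rationals, are linearly
  independent: the largest jump point is isolated by a rational just below it.\<close>

lemma rational_steps_independent:
  fixes T :: "real set" and c :: "real \<Rightarrow> real"
  assumes "finite T"
    and "\<And>q. q \<in> \<rat> \<Longrightarrow> (\<Sum>l\<in>T. c l * (if q < l then 1 else 0)) = 0"
  shows "\<forall>l\<in>T. c l = 0"
  using assms
proof (induction T rule: finite_linorder_max_induct)
  case (insert b A)
  define m where "m = Max (insert (b - 1) A)"
  have m: "m < b" unfolding m_def using insert by (subst Max_less_iff) auto
  have below_m: "a \<le> m" if "a \<in> A" for a unfolding m_def using insert that by simp
  obtain q where q: "q \<in> \<rat>" "m < q" "q < b" using Rats_dense_in_real[OF m] by blast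
  have bA: "b \<notin> A" using insert by auto
  have "(\<Sum>l\<in>A. c l * (if q < l then 1 else 0)) = 0"
    using below_m q by (intro sum.neutral) (auto dest!: below_m)
  then have cb: "c b = 0" using insert.prems[OF q(1)] insert bA q by simp
  then have "\<forall>l\<in>A. c l = 0"
    using insert bA by (intro insert.IH) auto
  then show ?case using cb by simp
qed simp

definition rat_enum :: "nat \<Rightarrow> real" where "rat_enum = from_nat_into (\<rat> :: real set)"

lemma range_rat_enum: "range rat_enum = (\<rat> :: real set)"
  unfolding rat_enum_def by (rule range_from_nat_into) (auto simp: countable_rat)

definition cut_field :: "real \<Rightarrow> c0 \<Rightarrow> c0" where
  "cut_field l = sqrt_field (\<lambda>k. if rat_enum k < l then 1 else 0)"

lemma coef_cut_field: "coef (cut_field l) k = (if rat_enum k < l then 1 else 0)"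
  unfolding cut_field_def by (rule coef_sqrt_field) simp

lemma cut_field_in_sqrt_fields: "cut_field l \<in> sqrt_fields"
  unfolding cut_field_def by (rule sqrt_field_in_sqrt_fields) simp

lemma inj_cut_field: "inj cut_field"
proof (rule injI)
  fix a b assume eq: "cut_field a = cut_field b"
  show "a = b"
  proof (rule ccontr)
    assume "a \<noteq> b"
    then have "min a b < max a b" by simp
    then obtain q where q: "q \<in> \<rat>" "min a b < q" "q < max a b"
      using Rats_dense_in_real by blast
    then obtain k where "rat_enum k = q" using range_rat_enum by (metis rangeE)
    then have "coef (cut_field a) k \<noteq> coef (cut_field b) k"
      using q by (auto simp: coef_cut_field min_def max_def split: if_splits)
    then show False using eq by simp
  qed
qed

lemma coef_sum: "finite T \<Longrightarrow> coef (sum f T) k = (\<Sum>v\<in>T. coef (f v) k)"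
  by (induction T rule: finite_induct) (simp_all only: sum.empty sum.insert coef_zero coef_add not_False_eq_True)

lemma independent_cut_fields: "\<not> module.dependent fscale (range cut_field)"
proof -
  interpret vector_space fscale by (rule vector_space_fscale)
  show ?thesis
  proof
    assume "dependent (range cut_field)"
    then obtain t u where t: "finite t" "t \<subseteq> range cut_field" "(\<Sum>v\<in>t. fscale (u v) v) = 0"
      and nz: "\<exists>v\<in>t. u v \<noteq> 0"
      unfolding dependent_explicit by blast
    define T where "T = cut_field -` t"
    have T: "finite T" unfolding T_def using t(1) inj_cut_field by (simp add: finite_vimageI)
    have tT: "t = cut_field ` T" unfolding T_def using t(2) by auto
    have "(\<Sum>l\<in>T. u (cut_field l) * (if q < l then 1 else 0)) = 0" if "q \<in> \<rat>" for q
    proof -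
      obtain k where k: "rat_enum k = q" using \<open>q \<in> \<rat>\<close> range_rat_enum by (metis rangeE)
      have "0 = coef (\<Sum>v\<in>t. fscale (u v) v) k" using t(3) by (simp add: coef_zero)
      also have "\<dots> = (\<Sum>v\<in>t. u v * coef v k)" using t(1) by (simp add: coef_sum coef_fscale)
      also have "\<dots> = (\<Sum>l\<in>T. u (cut_field l) * coef (cut_field l) k)"
        unfolding tT by (rule sum.reindex_cong[OF inj_on_subset[OF inj_cut_field subset_UNIV] refl refl])
      finally show ?thesis by (simp add: coef_cut_field k)
    qed
    then have "\<forall>l\<in>T. u (cut_field l) = 0" by (rule rational_steps_independent[OF T])
    then show False using nz tT by auto
  qed
qed

section \<open>A criterion for spaceability and the main theorem\<close>

text \<open>A closed subspace V within A \<union> {0} of cardinality at most |M| that contains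
  an independent set of cardinality at least |M| witnesses M-spaceability of A:
  a Hamel basis of V extending that set has cardinality exactly |M|.\<close>

lemma spaceableI:
  assumes closed: "closedin ucb_topology V" and subspace: "module.subspace fscale V"
    and VA: "V \<subseteq> A \<union> {0}"
    and LV: "L \<subseteq> V" and indep: "\<not> module.dependent fscale L"
    and V_le: "V \<lesssim> M" and L_ge: "M \<lesssim> L"
  shows "spaceable M A"
proof -
  interpret vector_space fscale by (rule vector_space_fscale)
  obtain B where B: "L \<subseteq> B" "B \<subseteq> V" "independent B" "V \<subseteq> span B"
    using maximal_independent_subset_extend[OF LV indep] by blast
  have "span B = V"
    using span_minimal[OF B(2) subspace] B(4) by blast
  moreover have "B \<approx> M"
  proof (rule lepoll_antisym)
    show "B \<lesssim> M" using subset_imp_lepoll[OF B(2)] V_le by (rule lepoll_trans)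
    show "M \<lesssim> B" using L_ge subset_imp_lepoll[OF B(1)] by (rule lepoll_trans)
  qed
  ultimately show ?thesis
    unfolding spaceable_def using closed subspace VA B(3) by blast
qed

theorem theorem2p1:
  shows "spaceable (UNIV :: real set) Kc0"
proof (rule spaceableI)
  show "closedin ucb_topology sqrt_fields" by (rule closed_sqrt_fields)
  show "module.subspace fscale sqrt_fields" by (rule subspace_sqrt_fields)
  show "sqrt_fields \<subseteq> Kc0 \<union> {0}" using sqrt_fields_in_Kc0 by blast
  show "range cut_field \<subseteq> sqrt_fields" using cut_field_in_sqrt_fields by blast
  show "\<not> module.dependent fscale (range cut_field)" by (rule independent_cut_fields)
  show "sqrt_fields \<lesssim> (UNIV :: real set)" by (rule sqrt_fields_lepoll_reals)
  show "(UNIV :: real set) \<lesssim> range cut_field"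
    unfolding lepoll_def using inj_cut_field by blast
qed

end
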